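(* Let $k\ge2$ and let $\phi$ be a monotone $[k]$-edge-labeling of $K^{(2)}_n$ that minimizes the number of bad triples among all monotone $[k]$-edge-labelings of $K^{(2)}_n$. Then for every $2\le i\le k$, $$|X_i|+|X_{i+1}|\le|X_{i-2}|+|X_{i-1}|+2.$$
   Context: $K^{(2)}_n$ is the complete graph on $[n]$ with its natural order. A $[k]$-edge-labeling $\phi$ assigns to each pair $uv$ ($u<v$) a label $\phi(uv)\in\{1,\dots,k\}$; it is monotone if $\phi(uv)\le\phi(vw)$ whenever $u<v<w$. A triple $u<v<w$ is good if $\phi(uv)<\phi(vw)$ and bad otherwise. Define $\Phi_L(1)=0$ and $\Phi_L(v)=\max\{\phi(uv):u<v\}$ for $v>1$. For $0\le i\le k+1$ let $X_i=\{v\in[n]:\Phi_L(v)=i\}$. *)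

theory Defs
  imports Main
begin

text \<open>An edge labeling of the complete graph on [n] = {1..n} is a function phi with
  phi u v the label of the pair uv for u < v (values outside this range are irrelevant).\<close>

definition is_labeling :: "nat \<Rightarrow> nat \<Rightarrow> (nat \<Rightarrow> nat \<Rightarrow> nat) \<Rightarrow> bool" where
  "is_labeling n k phi \<longleftrightarrow>
     (\<forall>u v. 1 \<le> u \<and> u < v \<and> v \<le> n \<longrightarrow> phi u v \<in> {1..k})"

definition monotone_labeling :: "nat \<Rightarrow> nat \<Rightarrow> (nat \<Rightarrow> nat \<Rightarrow> nat) \<Rightarrow> bool" where
  "monotone_labeling n k phi \<longleftrightarrow> is_labeling n k phi \<and>
     (\<forall>u v w. 1 \<le> u \<and> u < v \<and> v < w \<and> w \<le> n \<longrightarrow> phi u v \<le> phi v w)"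

definition bad_triples :: "nat \<Rightarrow> (nat \<Rightarrow> nat \<Rightarrow> nat) \<Rightarrow> (nat \<times> nat \<times> nat) set" where
  "bad_triples n phi = {(u, v, w). 1 \<le> u \<and> u < v \<and> v < w \<and> w \<le> n \<and> \<not> phi u v < phi v w}"

definition num_bad :: "nat \<Rightarrow> (nat \<Rightarrow> nat \<Rightarrow> nat) \<Rightarrow> nat" where
  "num_bad n phi = card (bad_triples n phi)"

definition PhiL :: "(nat \<Rightarrow> nat \<Rightarrow> nat) \<Rightarrow> nat \<Rightarrow> nat" where
  "PhiL phi v = (if v \<le> 1 then 0 else Max {phi u v | u. 1 \<le> u \<and> u < v})"

definition Xset :: "nat \<Rightarrow> (nat \<Rightarrow> nat \<Rightarrow> nat) \<Rightarrow> nat \<Rightarrow> nat set" where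
  "Xset n phi i = {v. 1 \<le> v \<and> v \<le> n \<and> PhiL phi v = i}"

end

theory Submission
  imports Defs
begin

(* Since phi is monotone, PhiL is nondecreasing and phi u v lies between PhiL u and PhiL v, so the
  levels X_j are consecutive intervals of [n].  Every inequality comes from comparing phi with a
  monotone labeling obtained by lowering some labels, counting bad triples by their middle vertex.

  If level j - 1 is empty, the labels into the first vertex of X_j can be lowered by one, which
  removes all bad triples centred there; but two vertices of one level always produce such a
  triple, so |X_j| <= 1.  Lowering the first vertices of X_i and X_(i+1) together in the same way
  settles the case that X_(i-2) and X_(i-1) are both empty.

  Otherwise let w be the first vertex of X_i, p the number of edges labelled i into w, and a the
  first vertex of X_(i-2) u X_(i-1).  Capping the labels at w destroys at least
  p (|X_i| - 1) + sum_(j < |X_(i+1)|) min(p, j) bad triples and creates at most the sum of u - a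
  over at most min(p, |X_(i-2)| + |X_(i-1)|) vertices u of X_(i-1).  If |X_i| + |X_(i+1)| exceeded
  |X_(i-2)| + |X_(i-1)| + 2, the destroyed triples would outnumber the created ones. *)

lemma sum_diff_le_sum_countdown:
  fixes U :: "nat set"
  assumes "finite U" "U \<subseteq> {a..b}"
  shows "(\<Sum>u\<in>U. u - a) \<le> (\<Sum>j<card U. b - a - j)"
  using assms
proof (induction "card U" arbitrary: U b)
  case 0
  then show ?case by simp
next
  case (Suc c)
  define m where "m = Max U"
  have "U \<noteq> {}" using Suc.hyps(2) by auto
  then have m: "m \<in> U" "\<And>u. u \<in> U \<Longrightarrow> u \<le> m"
    using Suc.prems(1) by (auto simp: m_def)
  have "U - {m} \<subseteq> {a..m - 1}"
    using m Suc.prems(2) by (fastforce simp: le_diff_conv2)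
  moreover have "c = card (U - {m})" using Suc.hyps(2) m(1) Suc.prems(1) by simp
  ultimately have IH: "(\<Sum>u\<in>U - {m}. u - a) \<le> (\<Sum>j<c. m - 1 - a - j)"
    using Suc.hyps(1) Suc.prems(1) by blast
  have "m \<le> b" using m(1) Suc.prems(2) by auto
  then have "(\<Sum>j<c. m - 1 - a - j) \<le> (\<Sum>j<c. b - a - Suc j)"
    by (intro sum_mono) linarith
  have "(\<Sum>u\<in>U. u - a) = (m - a) + (\<Sum>u\<in>U - {m}. u - a)"
    using Suc.prems(1) m(1) by (simp add: sum.remove)
  also have "\<dots> \<le> (b - a) + (\<Sum>j<c. b - a - Suc j)"
    using IH \<open>m \<le> b\<close> \<open>(\<Sum>j<c. m - 1 - a - j) \<le> _\<close> by linarith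
  also have "\<dots> = (\<Sum>j<Suc c. b - a - j)"
    by (simp only: sum.lessThan_Suc_shift diff_zero)
  finally show ?case using Suc.hyps(2) by simp
qed

lemma sum_min_Suc_lessThan: "(\<Sum>j<r. min (Suc q) j) = (\<Sum>j<r. min q j) + (r - Suc q)"
  for q r :: nat
  by (induction r) auto

lemma sum_countdown_plus_le:
  fixes s r M q :: nat
  assumes "M + 4 \<le> s + r" "q \<le> M + 1"
  shows "(\<Sum>j<q. M - j) + q \<le> q * (s - 1) + (\<Sum>j<r. min q j)"
  using assms(2)
proof (induction q)
  case 0
  then show ?case by simp
next
  case (Suc q)
  then have IH: "(\<Sum>j<q. M - j) + q \<le> q * (s - 1) + (\<Sum>j<r. min q j)" by simp
  have "M - q + 1 \<le> (s - 1) + (r - Suc q)" using assms(1) Suc.prems by linarith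
  with IH have "(\<Sum>j<Suc q. M - j) + Suc q
      \<le> (q * (s - 1) + (\<Sum>j<r. min q j)) + ((s - 1) + (r - Suc q))"
    by simp
  also have "\<dots> = Suc q * (s - 1) + (\<Sum>j<r. min (Suc q) j)" by (simp add: sum_min_Suc_lessThan)
  finally show ?case .
qed

lemma sum_countdown_less:
  fixes s r M m p :: nat
  assumes "M + 4 \<le> s + r" "m \<le> p" "1 \<le> p" "m \<le> M + 1"
  shows "(\<Sum>j<m. M - j) < p * (s - 1) + (\<Sum>j<r. min p j)"
proof -
  define q where "q = max m 1"
  have q: "1 \<le> q" "m \<le> q" "q \<le> p" "q \<le> M + 1" using assms by (auto simp: q_def)
  have "(\<Sum>j<m. M - j) \<le> (\<Sum>j<q. M - j)" using q by (intro sum_mono2) auto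
  also have "\<dots> < (\<Sum>j<q. M - j) + q" using q by simp
  also have "\<dots> \<le> q * (s - 1) + (\<Sum>j<r. min q j)" using sum_countdown_plus_le[OF assms(1) q(4)] .
  also have "\<dots> \<le> p * (s - 1) + (\<Sum>j<r. min p j)"
    using q by (intro add_mono mult_le_mono1 sum_mono) auto
  finally show ?thesis .
qed

lemma sum_atLeastAtMost_rev: "(\<Sum>y\<in>{lo..hi::nat}. f (hi - y)) = (\<Sum>j<Suc hi - lo. f j)"
  by (rule sum.reindex_bij_witness[of _ "\<lambda>j. hi - j" "\<lambda>y. hi - y"]) auto

lemma convex_nat_set_eq_atLeastAtMost:
  fixes S :: "nat set"
  assumes "finite S" "S \<noteq> {}" "\<And>a b x. a \<in> S \<Longrightarrow> b \<in> S \<Longrightarrow> a \<le> x \<Longrightarrow> x \<le> b \<Longrightarrow> x \<in> S"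
  shows "S = {Min S..Max S}"
proof
  show "S \<subseteq> {Min S..Max S}" using assms(1) by auto
  show "{Min S..Max S} \<subseteq> S"
    using assms(3)[OF Min_in[OF assms(1,2)] Max_in[OF assms(1,2)]] by auto
qed

lemma PhiL_eq_Max_image: "2 \<le> v \<Longrightarrow> PhiL phi v = Max ((\<lambda>u. phi u v) ` {1..<v})"
  unfolding PhiL_def by (auto intro!: arg_cong[where f = Max])

lemma phi_le_PhiL: "1 \<le> u \<Longrightarrow> u < v \<Longrightarrow> phi u v \<le> PhiL phi v"
  by (simp add: PhiL_eq_Max_image)

lemma PhiL_attained: "2 \<le> v \<Longrightarrow> \<exists>u. 1 \<le> u \<and> u < v \<and> phi u v = PhiL phi v"
proof -
  assume "2 \<le> v"
  then have "PhiL phi v \<in> (\<lambda>u. phi u v) ` {1..<v}"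
    unfolding PhiL_eq_Max_image[OF \<open>2 \<le> v\<close>] by (intro Max_in) auto
  then show ?thesis by auto
qed

lemma mem_Xset: "v \<in> Xset n phi j \<longleftrightarrow> 1 \<le> v \<and> v \<le> n \<and> PhiL phi v = j"
  by (simp add: Xset_def)

lemma finite_Xset: "finite (Xset n phi j)"
  by (rule finite_subset[of _ "{1..n}"]) (auto simp: mem_Xset)

definition bad_at :: "nat \<Rightarrow> (nat \<Rightarrow> nat \<Rightarrow> nat) \<Rightarrow> nat \<Rightarrow> (nat \<times> nat) set" where
  "bad_at n phi v = {(x, y). 1 \<le> x \<and> x < v \<and> v < y \<and> y \<le> n \<and> \<not> phi x v < phi v y}"

lemma finite_bad_at: "finite (bad_at n phi v)"
  by (rule finite_subset[of _ "{1..n} \<times> {1..n}"]) (auto simp: bad_at_def)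

lemma num_bad_eq_sum_bad_at: "num_bad n phi = (\<Sum>v\<in>{1..n}. card (bad_at n phi v))"
proof -
  have "bad_triples n phi = (\<Union>v\<in>{1..n}. (\<lambda>(x, y). (x, v, y)) ` bad_at n phi v)"
    by (auto simp: bad_triples_def bad_at_def image_iff)
  also have "card \<dots> = (\<Sum>v\<in>{1..n}. card ((\<lambda>(x, y). (x, v, y)) ` bad_at n phi v))"
    by (rule card_UN_disjoint) (auto simp: finite_bad_at)
  also have "\<dots> = (\<Sum>v\<in>{1..n}. card (bad_at n phi v))"
    by (intro sum.cong card_image inj_onI) auto
  finally show ?thesis unfolding num_bad_def .
qed

lemma bad_at_subset_if_lowered_above_PhiL:
  assumes "\<And>x. 1 \<le> x \<Longrightarrow> x < v \<Longrightarrow> psi x v \<le> phi x v"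
    and "\<And>y. v < y \<Longrightarrow> y \<le> n \<Longrightarrow> psi v y < phi v y \<Longrightarrow> PhiL phi v < psi v y"
  shows "bad_at n psi v \<subseteq> bad_at n phi v"
proof
  fix p assume "p \<in> bad_at n psi v"
  then obtain x y where p: "p = (x, y)" and xy: "1 \<le> x" "x < v" "v < y" "y \<le> n"
    and bad: "psi v y \<le> psi x v" by (auto simp: bad_at_def)
  have "psi x v \<le> PhiL phi v" using assms(1)[OF xy(1,2)] phi_le_PhiL[OF xy(1,2), of phi] by simp
  then have "phi v y \<le> psi v y" using assms(2)[OF xy(3,4)] bad by linarith
  then show "p \<in> bad_at n phi v" using p xy bad assms(1)[OF xy(1,2)] by (auto simp: bad_at_def)
qed

definition lower_into :: "nat set \<Rightarrow> (nat \<Rightarrow> nat \<Rightarrow> nat) \<Rightarrow> nat \<Rightarrow> nat \<Rightarrow> nat" where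
  "lower_into S phi x v = (if v \<in> S then min (phi x v) (PhiL phi v - 1) else phi x v)"

(* Capping the labels into w at i - 1 and
  those out of w at i removes all bad triples centred at w; the extra cap at i - 2 on edges from
  levels <= i - 3 into level i - 1 makes every new bad triple (x, v, w) have x at level >= i - 2. *)
definition relabel :: "(nat \<Rightarrow> nat \<Rightarrow> nat) \<Rightarrow> nat \<Rightarrow> nat \<Rightarrow> nat \<Rightarrow> nat \<Rightarrow> nat" where
  "relabel phi i w x v =
     (if v = w then min (phi x v) (i - 1)
      else if x = w then min (phi x v) i
      else if PhiL phi v = i - 1 \<and> PhiL phi x + 3 \<le> i then min (phi x v) (i - 2)
      else phi x v)"

lemma lower_into_le: "lower_into S phi x v \<le> phi x v"
  by (simp add: lower_into_def)

lemma relabel_le: "relabel phi i w x v \<le> phi x v"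
  by (simp add: relabel_def)

locale monotone_edge_labeling =
  fixes n k :: nat and phi :: "nat \<Rightarrow> nat \<Rightarrow> nat"
  assumes monotone: "monotone_labeling n k phi"
begin

lemma label_range: "1 \<le> u \<Longrightarrow> u < v \<Longrightarrow> v \<le> n \<Longrightarrow> 1 \<le> phi u v \<and> phi u v \<le> k"
  using monotone unfolding monotone_labeling_def is_labeling_def by auto

lemma label_mono: "1 \<le> u \<Longrightarrow> u < v \<Longrightarrow> v < w \<Longrightarrow> w \<le> n \<Longrightarrow> phi u v \<le> phi v w"
  using monotone unfolding monotone_labeling_def by blast

lemma PhiL_le_label: "1 \<le> v \<Longrightarrow> v < y \<Longrightarrow> y \<le> n \<Longrightarrow> PhiL phi v \<le> phi v y"
proof (cases "v = 1")
  case False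
  assume "1 \<le> v" "v < y" "y \<le> n"
  with False obtain u where "1 \<le> u" "u < v" "phi u v = PhiL phi v"
    using PhiL_attained[of v phi] by auto
  with \<open>v < y\<close> \<open>y \<le> n\<close> show ?thesis using label_mono[of u v y] by auto
qed (simp add: PhiL_def)

lemma label_between_PhiL:
  "1 \<le> v \<Longrightarrow> v < y \<Longrightarrow> y \<le> n \<Longrightarrow> PhiL phi v \<le> phi v y \<and> phi v y \<le> PhiL phi y"
  using PhiL_le_label phi_le_PhiL by blast

lemma PhiL_mono: "1 \<le> v \<Longrightarrow> v \<le> y \<Longrightarrow> y \<le> n \<Longrightarrow> PhiL phi v \<le> PhiL phi y"
  using label_between_PhiL by (metis le_less order.trans)

lemma less_if_PhiL_less:
  assumes "v \<le> n" "PhiL phi v < PhiL phi y"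
  shows "v < y"
proof (rule ccontr)
  assume "\<not> v < y"
  moreover have "y \<noteq> 0" using assms(2) by (cases y) (auto simp: PhiL_def)
  ultimately show False using PhiL_mono[of y v] assms by auto
qed

lemma Xset_less: "v \<in> Xset n phi j \<Longrightarrow> y \<in> Xset n phi l \<Longrightarrow> j < l \<Longrightarrow> v < y"
  using less_if_PhiL_less[of v y] by (auto simp: mem_Xset)

lemma mem_Xset_between:
  assumes "a \<in> Xset n phi j" "b \<in> Xset n phi l" "a \<le> x" "x \<le> b"
  shows "x \<in> Xset n phi (PhiL phi x) \<and> j \<le> PhiL phi x \<and> PhiL phi x \<le> l"
  using assms PhiL_mono[of a x] PhiL_mono[of x b] by (auto simp: mem_Xset)

lemma Xset_convex:
  "a \<in> Xset n phi j \<Longrightarrow> b \<in> Xset n phi j \<Longrightarrow> a \<le> x \<Longrightarrow> x \<le> b \<Longrightarrow> x \<in> Xset n phi j"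
  using mem_Xset_between[of a j b j x] by (metis le_antisym)

lemma Xset_eq_atLeastAtMost:
  "Xset n phi j \<noteq> {} \<Longrightarrow> Xset n phi j = {Min (Xset n phi j)..Max (Xset n phi j)}"
  by (rule convex_nat_set_eq_atLeastAtMost[OF finite_Xset _ Xset_convex])

lemma greaterThanAtMost_Max_subset_Xset:
  assumes "v \<in> Xset n phi j"
  shows "{v<..Max (Xset n phi j)} \<subseteq> Xset n phi j"
  using Xset_convex[OF assms Max_in[OF finite_Xset]] assms by fastforce

lemma Xset_Un_Xset_Suc_eq_atLeastAtMost:
  assumes "S = Xset n phi j \<union> Xset n phi (Suc j)" "S \<noteq> {}"
  shows "S = {Min S..Max S}"
proof (rule convex_nat_set_eq_atLeastAtMost)
  fix a b x assume "a \<in> S" "b \<in> S" "a \<le> x" "x \<le> b"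
  moreover obtain ja jb where "a \<in> Xset n phi ja" "b \<in> Xset n phi jb" "ja \<in> {j, Suc j}" "jb \<in> {j, Suc j}"
    using \<open>a \<in> S\<close> \<open>b \<in> S\<close> assms(1) by blast
  ultimately have "x \<in> Xset n phi (PhiL phi x)" "PhiL phi x \<in> {j, Suc j}"
    using mem_Xset_between[of a ja b jb x] by auto
  then show "x \<in> S" using assms(1) by auto
qed (use assms finite_Xset in auto)

lemma PhiL_less_before_Min:
  assumes "Xset n phi j \<noteq> {}" "1 \<le> v" "v < Min (Xset n phi j)"
  shows "PhiL phi v < j"
proof -
  let ?w = "Min (Xset n phi j)"
  have w: "?w \<in> Xset n phi j" using Min_in[OF finite_Xset assms(1)] .
  then have "PhiL phi v \<le> j" using PhiL_mono[of v ?w] assms by (auto simp: mem_Xset)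
  moreover have "v \<notin> Xset n phi j" using Min_le[OF finite_Xset[of n phi j], of v] assms(3) by auto
  ultimately show ?thesis using assms w by (auto simp: mem_Xset)
qed

lemma bad_at_nonempty:
  assumes "1 \<le> j" "y \<in> Xset n phi j" "z \<in> Xset n phi j" "y < z"
  shows "bad_at n phi y \<noteq> {}"
proof -
  have y: "1 \<le> y" "PhiL phi y = j" and z: "z \<le> n" "PhiL phi z = j"
    using assms(2,3) by (auto simp: mem_Xset)
  then have "2 \<le> y" using assms(1) by (cases "y = 1") (auto simp: PhiL_def)
  then obtain x where x: "1 \<le> x" "x < y" "phi x y = j" using PhiL_attained[of y phi] y by auto
  have "phi y z = j" using label_between_PhiL[of y z] y z assms(4) by auto
  then have "(x, z) \<in> bad_at n phi y" using x z assms(4) by (auto simp: bad_at_def)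
  then show ?thesis by auto
qed

lemma card_Xset_le_1_if_bad_at_Min_empty:
  assumes "1 \<le> j" "bad_at n phi (Min (Xset n phi j)) = {}"
  shows "card (Xset n phi j) \<le> 1"
proof (cases "Xset n phi j = {}")
  case False
  let ?w = "Min (Xset n phi j)"
  have "Xset n phi j \<subseteq> {?w}"
  proof
    fix z assume z: "z \<in> Xset n phi j"
    have "?w \<le> z" using Min_le[OF finite_Xset z] .
    moreover have "\<not> ?w < z"
      using bad_at_nonempty[OF assms(1) Min_in[OF finite_Xset False] z] assms(2) by blast
    ultimately show "z \<in> {?w}" by simp
  qed
  then show ?thesis using card_mono[of "{?w}"] by simp
qed simp

context
  fixes S :: "nat set"
  assumes S_high: "\<And>v. v \<in> S \<Longrightarrow> 2 \<le> PhiL phi v"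
    and S_gap: "\<And>v y. 1 \<le> v \<Longrightarrow> v < y \<Longrightarrow> y \<le> n \<Longrightarrow> y \<in> S \<Longrightarrow>
                  PhiL phi v + (if v \<in> S then 1 else 2) \<le> PhiL phi y"
begin

lemma lower_into_lowered:
  "1 \<le> x \<Longrightarrow> x < v \<Longrightarrow> lower_into S phi x v + (if v \<in> S then 1 else 0) \<le> PhiL phi v"
  using phi_le_PhiL[of x v phi] S_high[of v] by (auto simp: lower_into_def)

lemma monotone_lower_into: "monotone_labeling n k (lower_into S phi)"
  unfolding monotone_labeling_def is_labeling_def
proof (intro conjI allI impI)
  fix u v assume "1 \<le> u \<and> u < v \<and> v \<le> n"
  then show "lower_into S phi u v \<in> {1..k}"
    using label_range[of u v] S_high[of v] by (auto simp: lower_into_def)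
next
  fix x v y assume xvy: "1 \<le> x \<and> x < v \<and> v < y \<and> y \<le> n"
  then have "lower_into S phi x v \<le> phi v y"
    using label_mono[of x v y] lower_into_le[of S phi x v] by simp
  moreover have "lower_into S phi x v + 2 \<le> PhiL phi y" if "y \<in> S"
    using lower_into_lowered[of x v] S_gap[of v y] xvy that by (auto split: if_splits)
  ultimately show "lower_into S phi x v \<le> lower_into S phi v y"
    by (auto simp: lower_into_def)
qed

lemma bad_at_lower_into_eq_empty:
  assumes "v \<in> S" "1 \<le> v"
  shows "bad_at n (lower_into S phi) v = {}"
proof -
  have "lower_into S phi x v < lower_into S phi v y" if "1 \<le> x" "x < v" "v < y" "y \<le> n" for x y
  proof -
    have "PhiL phi v \<le> lower_into S phi v y"
      using PhiL_le_label[of v y] S_gap[of v y] that assms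
      by (auto simp: lower_into_def split: if_splits)
    then show ?thesis using lower_into_lowered[OF that(1,2)] assms(1) by simp
  qed
  then show ?thesis by (auto simp: bad_at_def)
qed

lemma bad_at_lower_into_subset:
  assumes "v \<notin> S" "1 \<le> v"
  shows "bad_at n (lower_into S phi) v \<subseteq> bad_at n phi v"
proof (rule bad_at_subset_if_lowered_above_PhiL)
  fix y assume "v < y" "y \<le> n" "lower_into S phi v y < phi v y"
  then show "PhiL phi v < lower_into S phi v y"
    using S_gap[of v y] assms by (auto simp: lower_into_def min_def split: if_splits)
qed (rule lower_into_le)

end

context
  fixes i w :: nat
  assumes level: "2 \<le> i" and w: "w \<in> Xset n phi i"
    and before_w: "\<And>v. 1 \<le> v \<Longrightarrow> v < w \<Longrightarrow> PhiL phi v < i"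
begin

lemma monotone_relabel: "monotone_labeling n k (relabel phi i w)"
  unfolding monotone_labeling_def is_labeling_def
proof (intro conjI allI impI)
  fix x v assume "1 \<le> x \<and> x < v \<and> v \<le> n"
  then have "1 \<le> phi x v \<and> phi x v \<le> k" using label_range by blast
  then show "relabel phi i w x v \<in> {1..k}"
    using level relabel_le[of phi i w x v] by (auto simp: relabel_def)
next
  fix x v y assume xvy: "1 \<le> x \<and> x < v \<and> v < y \<and> y \<le> n"
  have "phi x v \<le> phi v y" using label_mono xvy by blast
  moreover have "phi x v \<le> PhiL phi v" using phi_le_PhiL xvy by blast
  moreover have "PhiL phi v < i" if "y = w" using before_w[of v] xvy that by simp
  ultimately show "relabel phi i w x v \<le> relabel phi i w v y"
    using relabel_le[of phi i w x v] by (auto simp: relabel_def)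
qed

lemma bad_at_relabel_eq_empty: "bad_at n (relabel phi i w) w = {}"
proof -
  have "relabel phi i w x w < relabel phi i w w y" if "w < y" "y \<le> n" for x y
    using PhiL_le_label[of w y] w that level by (simp add: relabel_def mem_Xset)
  then show ?thesis by (auto simp: bad_at_def)
qed

lemma bad_at_relabel_subset:
  assumes "1 \<le> v" "v \<noteq> w" "PhiL phi v \<noteq> i - 1"
  shows "bad_at n (relabel phi i w) v \<subseteq> bad_at n phi v"
proof (rule bad_at_subset_if_lowered_above_PhiL)
  fix y assume "v < y" "y \<le> n" "relabel phi i w v y < phi v y"
  then show "PhiL phi v < relabel phi i w v y"
    using assms before_w[of v] by (auto simp: relabel_def split: if_splits)
qed (rule relabel_le)

lemma card_bad_at_relabel_level_Suc:
  assumes v: "v \<in> Xset n phi (Suc i)" and "phi w v = Suc i"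
    and h: "{v<..h} \<subseteq> Xset n phi (Suc i)"
  shows "card (bad_at n (relabel phi i w) v) + (h - v) \<le> card (bad_at n phi v)"
proof -
  have v_bounds: "1 \<le> v" "v \<le> n" "PhiL phi v = Suc i" using v by (auto simp: mem_Xset)
  have "w < v" using Xset_less[OF w v] by simp
  have label_vy: "phi v y = Suc i" if "y \<in> {v<..h}" for y
  proof -
    have "y \<in> Xset n phi (Suc i)" using h that by blast
    then show ?thesis using label_between_PhiL[of v y] that v_bounds by (auto simp: mem_Xset)
  qed
  let ?E = "{w} \<times> {v<..h}"
  have "?E \<subseteq> bad_at n phi v"
    using label_vy h w \<open>w < v\<close> assms(2) by (force simp: bad_at_def mem_Xset)
  moreover have "bad_at n (relabel phi i w) v \<subseteq> bad_at n phi v"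
    using bad_at_relabel_subset v_bounds \<open>w < v\<close> by simp
  moreover have "bad_at n (relabel phi i w) v \<inter> ?E = {}"
    using label_vy \<open>w < v\<close> v_bounds assms(2) by (auto simp: bad_at_def relabel_def)
  ultimately have "card (bad_at n (relabel phi i w) v) + card ?E \<le> card (bad_at n phi v)"
    using card_mono[OF finite_bad_at, of "bad_at n (relabel phi i w) v \<union> ?E"]
    by (simp add: card_Un_disjoint finite_bad_at)
  then show ?thesis by simp
qed

lemma card_bad_at_relabel_level_pred:
  assumes v: "v \<in> Xset n phi (i - 1)"
    and a: "\<And>x. 1 \<le> x \<Longrightarrow> x < w \<Longrightarrow> i \<le> PhiL phi x + 2 \<Longrightarrow> a \<le> x"
  shows "card (bad_at n (relabel phi i w) v)
    \<le> card (bad_at n phi v) + (if phi v w = i then v - a else 0)"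
proof -
  have v_bounds: "1 \<le> v" "v \<le> n" "PhiL phi v = i - 1" using v by (auto simp: mem_Xset)
  have w_bounds: "w \<le> n" "PhiL phi w = i" using w by (auto simp: mem_Xset)
  have "v < w" using Xset_less[OF v w] level by simp
  let ?E = "if phi v w = i then {a..<v} \<times> {w} else {}"
  have "bad_at n (relabel phi i w) v \<subseteq> bad_at n phi v \<union> ?E"
  proof
    fix p assume "p \<in> bad_at n (relabel phi i w) v"
    then obtain x y where p: "p = (x, y)" and xy: "1 \<le> x" "x < v" "v < y" "y \<le> n"
      and bad: "relabel phi i w v y \<le> relabel phi i w x v" by (auto simp: bad_at_def)
    show "p \<in> bad_at n phi v \<union> ?E"
    proof (cases "y = w")
      case False
      then show ?thesis
        using p xy bad relabel_le[of phi i w x v] v_bounds level \<open>v < w\<close>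
        by (auto simp: bad_at_def relabel_def)
    next
      case True
      have "PhiL phi v \<le> phi v w" using PhiL_le_label[of v w] v_bounds \<open>v < w\<close> w_bounds by simp
      then have "i - 1 \<le> relabel phi i w x v" using bad True v_bounds by (simp add: relabel_def)
      then have "\<not> PhiL phi x + 3 \<le> i" and "i - 1 \<le> phi x v"
        using \<open>v < w\<close> xy v_bounds level by (auto simp: relabel_def split: if_splits)
      moreover have "phi v w \<le> i" using phi_le_PhiL[of v w phi] v_bounds \<open>v < w\<close> w_bounds by simp
      ultimately show ?thesis
        using a[of x] p xy True \<open>v < w\<close> by (cases "phi v w = i") (auto simp: bad_at_def)
    qed
  qed
  then have "card (bad_at n (relabel phi i w) v) \<le> card (bad_at n phi v \<union> ?E)"
    by (intro card_mono) (simp_all add: finite_bad_at)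
  also have "\<dots> \<le> card (bad_at n phi v) + card ?E" by (rule card_Un_le)
  finally show ?thesis by (simp add: card_cartesian_product split: if_splits)
qed

lemma card_bad_at_relabel_le:
  assumes v: "1 \<le> v" "v \<le> n"
    and h: "\<And>v. v \<in> Xset n phi (Suc i) \<Longrightarrow> {v<..h} \<subseteq> Xset n phi (Suc i)"
    and a: "\<And>x. 1 \<le> x \<Longrightarrow> x < w \<Longrightarrow> i \<le> PhiL phi x + 2 \<Longrightarrow> a \<le> x"
  shows "card (bad_at n (relabel phi i w) v)
      + ((if v = w then card (bad_at n phi w) else 0)
        + (if v \<in> Xset n phi (Suc i) \<and> phi w v = Suc i then h - v else 0))
    \<le> card (bad_at n phi v) + (if v \<in> Xset n phi (i - 1) \<and> phi v w = i then v - a else 0)"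
proof -
  have w_level: "PhiL phi w = i" using w by (simp add: mem_Xset)
  consider "v = w" | "v \<in> Xset n phi (Suc i)" | "v \<in> Xset n phi (i - 1)"
    | "v \<noteq> w" "v \<notin> Xset n phi (Suc i)" "v \<notin> Xset n phi (i - 1)" by blast
  then show ?thesis
  proof cases
    case 1
    then show ?thesis using bad_at_relabel_eq_empty w_level level by (simp add: mem_Xset)
  next
    case 2
    then have "v \<noteq> w" "PhiL phi v = Suc i" using w_level by (auto simp: mem_Xset)
    then have "card (bad_at n (relabel phi i w) v) \<le> card (bad_at n phi v)"
      using bad_at_relabel_subset[OF v(1)] card_mono[OF finite_bad_at] by simp
    then show ?thesis using card_bad_at_relabel_level_Suc[OF 2 _ h[OF 2]] 2 \<open>v \<noteq> w\<close> level
      by (auto simp: mem_Xset)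
  next
    case 3
    then have "v \<noteq> w" "v \<notin> Xset n phi (Suc i)" using w_level level by (auto simp: mem_Xset)
    then show ?thesis using card_bad_at_relabel_level_pred[OF 3 a] 3 by simp
  next
    case 4
    then have "PhiL phi v \<noteq> i - 1" using v by (auto simp: mem_Xset)
    then show ?thesis
      using bad_at_relabel_subset[OF v(1)] card_mono[OF finite_bad_at] 4 by simp
  qed
qed

lemma Min_lower_levels_le:
  assumes "1 \<le> x" "x < w" "i \<le> PhiL phi x + 2"
  shows "Min (Xset n phi (i - 2) \<union> Xset n phi (i - 1)) \<le> x"
proof -
  have "PhiL phi x = i - 2 \<or> PhiL phi x = i - 1" using before_w[OF assms(1,2)] assms(3) by linarith
  moreover have "x \<le> n" using assms(2) w by (simp add: mem_Xset)
  ultimately have "x \<in> Xset n phi (i - 2) \<union> Xset n phi (i - 1)" using assms(1) by (auto simp: mem_Xset)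
  then show ?thesis by (simp add: finite_Xset)
qed

lemma card_in_edges_pos: "1 \<le> card {x. 1 \<le> x \<and> x < w \<and> phi x w = i}"
proof -
  have w_bounds: "1 \<le> w" "PhiL phi w = i" using w by (auto simp: mem_Xset)
  then have "2 \<le> w" using level by (cases "w = 1") (auto simp: PhiL_def)
  then have "{x. 1 \<le> x \<and> x < w \<and> phi x w = i} \<noteq> {}"
    using PhiL_attained[of w phi] w_bounds by auto
  moreover have "finite {x. 1 \<le> x \<and> x < w \<and> phi x w = i}" by simp
  ultimately show ?thesis by (simp add: Suc_le_eq card_gt_0_iff)
qed

lemma card_in_edges_from_pred_le:
  "card {u \<in> Xset n phi (i - 1). phi u w = i} \<le> card {x. 1 \<le> x \<and> x < w \<and> phi x w = i}"
proof (rule card_mono)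
  show "{u \<in> Xset n phi (i - 1). phi u w = i} \<subseteq> {x. 1 \<le> x \<and> x < w \<and> phi x w = i}"
    using Xset_less[OF _ w, of _ "i - 1"] level by (auto simp: mem_Xset)
qed simp

lemma card_bad_at_first_ge:
  "card {x. 1 \<le> x \<and> x < w \<and> phi x w = i} *
     (card (Xset n phi i) - 1 + card {y \<in> Xset n phi (Suc i). phi w y = i})
   \<le> card (bad_at n phi w)"
proof -
  let ?P = "{x. 1 \<le> x \<and> x < w \<and> phi x w = i}"
  let ?Q = "{y \<in> Xset n phi (Suc i). phi w y = i}"
  let ?B = "{y. w < y \<and> y \<le> n \<and> phi w y = i}"
  have w_bounds: "1 \<le> w" "w \<le> n" "PhiL phi w = i" using w by (auto simp: mem_Xset)
  have "y \<in> ?B" if y: "y \<in> Xset n phi i" "y \<noteq> w" for y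
  proof -
    have "\<not> y < w" using before_w[of y] y by (auto simp: mem_Xset)
    then have "w < y" using y(2) by simp
    then show ?thesis using label_between_PhiL[of w y] w_bounds y(1) by (auto simp: mem_Xset)
  qed
  moreover have "?Q \<subseteq> ?B" using Xset_less[OF w] by (auto simp: mem_Xset)
  ultimately have "(Xset n phi i - {w}) \<union> ?Q \<subseteq> ?B" by blast
  moreover have "finite ?B" by (rule finite_subset[of _ "{..n}"]) auto
  ultimately have "card ((Xset n phi i - {w}) \<union> ?Q) \<le> card ?B" by (rule card_mono[rotated])
  moreover have "(Xset n phi i - {w}) \<inter> ?Q = {}" by (auto simp: mem_Xset)
  ultimately have "card (Xset n phi i) - 1 + card ?Q \<le> card ?B"
    using w finite_Xset by (simp add: card_Un_disjoint)
  moreover have "?P \<times> ?B \<subseteq> bad_at n phi w" by (auto simp: bad_at_def)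
  then have "card (?P \<times> ?B) \<le> card (bad_at n phi w)" by (rule card_mono[OF finite_bad_at])
  then have "card ?P * card ?B \<le> card (bad_at n phi w)" by (simp add: card_cartesian_product)
  ultimately show ?thesis by (meson le_trans mult_le_mono2)
qed

lemma card_bad_at_first_plus_ge:
  assumes p: "p = card {x. 1 \<le> x \<and> x < w \<and> phi x w = i}"
    and h: "h = Max (Xset n phi (Suc i))"
  shows "p * (card (Xset n phi i) - 1) + (\<Sum>j<card (Xset n phi (Suc i)). min p j)
    \<le> card (bad_at n phi w) + (\<Sum>v | v \<in> Xset n phi (Suc i) \<and> phi w v = Suc i. h - v)"
proof -
  let ?X = "Xset n phi (Suc i)"
  have "(\<Sum>j<card ?X. min p j) = (\<Sum>y\<in>?X. min p (h - y))"
  proof (cases "?X = {}")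
    case False
    then obtain lo where "?X = {lo..h}" using Xset_eq_atLeastAtMost h by blast
    then show ?thesis using sum_atLeastAtMost_rev[where f = "min p" and lo = lo and hi = h] by simp
  qed simp
  also have "\<dots> \<le> (\<Sum>y\<in>?X. (if phi w y = i then p else 0) + (if phi w y = Suc i then h - y else 0))"
  proof (rule sum_mono)
    fix y assume "y \<in> ?X"
    then have "phi w y = i \<or> phi w y = Suc i"
      using label_between_PhiL[of w y] Xset_less[OF w, of y] w by (auto simp: mem_Xset)
    then show "min p (h - y)
        \<le> (if phi w y = i then p else 0) + (if phi w y = Suc i then h - y else 0)"
      by auto
  qed
  also have "\<dots> = p * card {y \<in> ?X. phi w y = i} + (\<Sum>v | v \<in> ?X \<and> phi w v = Suc i. h - v)"
    by (simp add: sum.distrib sum.inter_filter[OF finite_Xset, symmetric] mult.commute)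
  finally show ?thesis
    using card_bad_at_first_ge p by (simp add: algebra_simps)
qed

end

end

locale optimal_edge_labeling = monotone_edge_labeling +
  assumes optimal: "\<And>psi. monotone_labeling n k psi \<Longrightarrow> num_bad n phi \<le> num_bad n psi"
begin

lemma sum_gain_le_sum_loss:
  assumes "monotone_labeling n k psi"
    and "\<And>v. 1 \<le> v \<Longrightarrow> v \<le> n \<Longrightarrow> card (bad_at n psi v) + gain v \<le> card (bad_at n phi v) + loss v"
  shows "(\<Sum>v\<in>{1..n}. gain v) \<le> (\<Sum>v\<in>{1..n}. loss v)"
proof -
  have "num_bad n psi + (\<Sum>v\<in>{1..n}. gain v) \<le> num_bad n phi + (\<Sum>v\<in>{1..n}. loss v)"
    unfolding num_bad_eq_sum_bad_at sum.distrib[symmetric] by (intro sum_mono) (simp add: assms(2))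
  then show ?thesis using optimal[OF assms(1)] by linarith
qed

lemma bad_at_eq_empty_if_lowerable:
  assumes S_high: "\<And>v. v \<in> S \<Longrightarrow> 2 \<le> PhiL phi v"
    and S_gap: "\<And>v y. 1 \<le> v \<Longrightarrow> v < y \<Longrightarrow> y \<le> n \<Longrightarrow> y \<in> S \<Longrightarrow>
                  PhiL phi v + (if v \<in> S then 1 else 2) \<le> PhiL phi y"
    and z: "z \<in> S" "1 \<le> z" "z \<le> n"
  shows "bad_at n phi z = {}"
proof -
  have "card (bad_at n (lower_into S phi) v) + (if v \<in> S then card (bad_at n phi v) else 0)
      \<le> card (bad_at n phi v) + 0" if "1 \<le> v" for v
    using bad_at_lower_into_eq_empty[OF S_high S_gap _ that]
      bad_at_lower_into_subset[OF S_high S_gap _ that] card_mono[OF finite_bad_at]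
    by (cases "v \<in> S") auto
  then have "(\<Sum>v\<in>{1..n}. if v \<in> S then card (bad_at n phi v) else 0) \<le> (\<Sum>v\<in>{1..n}. 0)"
    by (intro sum_gain_le_sum_loss[OF monotone_lower_into[OF S_high S_gap]])
  then have "\<forall>v\<in>{1..n}. (if v \<in> S then card (bad_at n phi v) else 0) = 0"
    by (simp add: sum_eq_0_iff)
  then have "card (bad_at n phi z) = 0" using z by force
  then show ?thesis using finite_bad_at by simp
qed

lemma card_Xset_le_1_if_gap:
  assumes "2 \<le> j" "Xset n phi (j - 1) = {}"
  shows "card (Xset n phi j) \<le> 1"
proof (cases "Xset n phi j = {}")
  case False
  define w where "w = Min (Xset n phi j)"
  have w: "w \<in> Xset n phi j" using Min_in[OF finite_Xset False] by (simp add: w_def)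
  have w_bounds: "1 \<le> w" "w \<le> n" "PhiL phi w = j" using w by (auto simp: mem_Xset)
  have below: "PhiL phi v + 2 \<le> j" if "1 \<le> v" "v < w" for v
  proof -
    have "PhiL phi v < j" using PhiL_less_before_Min[OF False that[unfolded w_def]] .
    moreover have "v \<notin> Xset n phi (j - 1)" using assms(2) by simp
    then have "PhiL phi v \<noteq> j - 1" using that w_bounds by (simp add: mem_Xset)
    ultimately show ?thesis by linarith
  qed
  have "bad_at n phi w = {}"
  proof (rule bad_at_eq_empty_if_lowerable[of "{w}"])
    fix v u assume "1 \<le> v" "v < u" "u \<in> {w}"
    then show "PhiL phi v + (if v \<in> {w} then 1 else 2) \<le> PhiL phi u"
      using below[of v] w_bounds by auto
  qed (use w_bounds assms(1) in auto)
  then show ?thesis using card_Xset_le_1_if_bad_at_Min_empty assms(1) by (simp add: w_def)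
qed simp

lemma card_Xset_Suc_le_1_if_gap:
  assumes "2 \<le> j" "Xset n phi (j - 2) = {}" "Xset n phi (j - 1) = {}"
  shows "card (Xset n phi (Suc j)) \<le> 1"
proof (cases "Xset n phi j = {}")
  case True
  then show ?thesis using card_Xset_le_1_if_gap[of "Suc j"] assms(1) by simp
next
  case False
  then have "card (Xset n phi j) = 1"
    using card_Xset_le_1_if_gap[OF assms(1,3)] card_gt_0_iff[of "Xset n phi j"] finite_Xset[of n phi j]
    by linarith
  then obtain w where Xj: "Xset n phi j = {w}" by (rule card_1_singletonE)
  show ?thesis
  proof (cases "Xset n phi (Suc j) = {}")
    case False
    define y where "y = Min (Xset n phi (Suc j))"
    have y: "y \<in> Xset n phi (Suc j)" using Min_in[OF finite_Xset False] by (simp add: y_def)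
    have w: "w \<in> Xset n phi j" using Xj by simp
    have "w < y" using Xset_less[OF w y] by simp
    have w_level: "PhiL phi w = j" and y_bounds: "1 \<le> y" "y \<le> n" "PhiL phi y = Suc j"
      using w y by (auto simp: mem_Xset)
    have below: "PhiL phi v + 3 \<le> j" if "1 \<le> v" "v < y" "v \<noteq> w" for v
    proof -
      have "PhiL phi v < Suc j" using PhiL_less_before_Min[OF False that(1,2)[unfolded y_def]] .
      moreover have "v \<notin> Xset n phi j" "v \<notin> Xset n phi (j - 1)" "v \<notin> Xset n phi (j - 2)"
        using Xj assms(2,3) that(3) by auto
      then have "PhiL phi v \<noteq> j" "PhiL phi v \<noteq> j - 1" "PhiL phi v \<noteq> j - 2"
        using that y_bounds unfolding mem_Xset by auto
      ultimately show ?thesis using assms(1) by linarith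
    qed
    have "bad_at n phi y = {}"
    proof (rule bad_at_eq_empty_if_lowerable[of "{w, y}"])
      fix v u assume v: "1 \<le> v" "v < u" "u \<in> {w, y}"
      show "PhiL phi v + (if v \<in> {w, y} then 1 else 2) \<le> PhiL phi u"
      proof (cases "v = w")
        case False
        then have "PhiL phi v + 3 \<le> j" using below[of v] v \<open>w < y\<close> by auto
        then show ?thesis using v w_level y_bounds by auto
      qed (use v \<open>w < y\<close> w_level y_bounds in auto)
    qed (use w_level y_bounds assms(1) in auto)
    then show ?thesis using card_Xset_le_1_if_bad_at_Min_empty by (simp add: y_def)
  qed simp
qed

lemma card_bad_at_first_le:
  assumes level: "2 \<le> i" and w: "w \<in> Xset n phi i"
    and before_w: "\<And>v. 1 \<le> v \<Longrightarrow> v < w \<Longrightarrow> PhiL phi v < i"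
    and h: "\<And>v. v \<in> Xset n phi (Suc i) \<Longrightarrow> {v<..h} \<subseteq> Xset n phi (Suc i)"
    and a: "\<And>x. 1 \<le> x \<Longrightarrow> x < w \<Longrightarrow> i \<le> PhiL phi x + 2 \<Longrightarrow> a \<le> x"
  shows "card (bad_at n phi w) + (\<Sum>v | v \<in> Xset n phi (Suc i) \<and> phi w v = Suc i. h - v)
    \<le> (\<Sum>u | u \<in> Xset n phi (i - 1) \<and> phi u w = i. u - a)"
proof -
  let ?F = "{v \<in> Xset n phi (Suc i). phi w v = Suc i}"
  let ?G = "{u \<in> Xset n phi (i - 1). phi u w = i}"
  have "card (bad_at n (relabel phi i w) v)
      + ((if v = w then card (bad_at n phi w) else 0) + (if v \<in> ?F then h - v else 0))
    \<le> card (bad_at n phi v) + (if v \<in> ?G then v - a else 0)" if "1 \<le> v" "v \<le> n" for v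
    using card_bad_at_relabel_le[OF level w before_w that h a] by simp
  then have "(\<Sum>v\<in>{1..n}. (if v = w then card (bad_at n phi w) else 0) + (if v \<in> ?F then h - v else 0))
      \<le> (\<Sum>v\<in>{1..n}. if v \<in> ?G then v - a else 0)"
    by (intro sum_gain_le_sum_loss[OF monotone_relabel[OF level w before_w]])
  moreover have "w \<in> {1..n}" "?F \<subseteq> {1..n}" "?G \<subseteq> {1..n}" using w by (auto simp: mem_Xset)
  then have "(\<Sum>v\<in>{1..n}. if v \<in> ?F then h - v else 0) = (\<Sum>v\<in>?F. h - v)"
    "(\<Sum>v\<in>{1..n}. if v \<in> ?G then v - a else 0) = (\<Sum>u\<in>?G. u - a)"
    "(\<Sum>v\<in>{1..n}. if v = w then card (bad_at n phi w) else 0) = card (bad_at n phi w)"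
    by (simp_all only: sum.inter_restrict[OF finite_atLeastAtMost, symmetric] Int_absorb1)
      (simp add: sum.delta)
  ultimately show ?thesis by (simp add: sum.distrib)
qed

lemma card_Xset_pair_le:
  assumes level: "2 \<le> i" and Xi: "Xset n phi i \<noteq> {}"
    and below: "Xset n phi (i - 2) \<union> Xset n phi (i - 1) \<noteq> {}"
  shows "card (Xset n phi i) + card (Xset n phi (Suc i))
    \<le> card (Xset n phi (i - 2)) + card (Xset n phi (i - 1)) + 2"
proof (rule ccontr)
  define A where "A = Xset n phi (i - 2) \<union> Xset n phi (i - 1)"
  define a where "a = Min A"
  define b where "b = Max A"
  define w where "w = Min (Xset n phi i)"
  define p where "p = card {x. 1 \<le> x \<and> x < w \<and> phi x w = i}"
  define U where "U = {u. u \<in> Xset n phi (i - 1) \<and> phi u w = i}"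
  let ?s = "card (Xset n phi i)" and ?r = "card (Xset n phi (Suc i))"
  let ?h = "Max (Xset n phi (Suc i))"
  have "card A = card (Xset n phi (i - 2)) + card (Xset n phi (i - 1))"
    unfolding A_def by (rule card_Un_disjoint) (use level in \<open>auto simp: finite_Xset mem_Xset\<close>)
  moreover assume "\<not> ?thesis"
  moreover have "A = {a..b}"
    using Xset_Un_Xset_Suc_eq_atLeastAtMost[of A "i - 2"] below level
    by (simp add: A_def a_def b_def Suc_diff_Suc numeral_2_eq_2)
  moreover have "a \<le> b" using \<open>A = {a..b}\<close> below by (auto simp: A_def)
  ultimately have many: "b - a + 4 \<le> ?s + ?r" by simp
  have w: "w \<in> Xset n phi i" using Min_in[OF finite_Xset Xi] by (simp add: w_def)
  have before_w: "PhiL phi v < i" if "1 \<le> v" "v < w" for v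
    using PhiL_less_before_Min[OF Xi] that by (simp add: w_def)
  have a_le: "a \<le> x" if "1 \<le> x" "x < w" "i \<le> PhiL phi x + 2" for x
    using Min_lower_levels_le[OF level w before_w that] by (simp add: a_def A_def)
  have "U \<subseteq> {a..b}" using \<open>A = {a..b}\<close> by (auto simp: U_def A_def)
  then have "card U \<le> b - a + 1" using card_mono[of "{a..b}" U] by simp
  have "p * (?s - 1) + (\<Sum>j<?r. min p j)
      \<le> card (bad_at n phi w) + (\<Sum>v | v \<in> Xset n phi (Suc i) \<and> phi w v = Suc i. ?h - v)"
    by (rule card_bad_at_first_plus_ge[OF level w before_w p_def refl])
  also have "\<dots> \<le> (\<Sum>u\<in>U. u - a)"
    unfolding U_def
    by (rule card_bad_at_first_le[OF level w before_w greaterThanAtMost_Max_subset_Xset a_le])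
  also have "\<dots> \<le> (\<Sum>j<card U. b - a - j)"
    by (rule sum_diff_le_sum_countdown) (use \<open>U \<subseteq> {a..b}\<close> finite_subset in auto)
  also have "\<dots> < p * (?s - 1) + (\<Sum>j<?r. min p j)"
    using many \<open>card U \<le> b - a + 1\<close> card_in_edges_pos[OF level w before_w]
      card_in_edges_from_pred_le[OF level w before_w]
    by (intro sum_countdown_less) (auto simp: p_def U_def)
  finally show False by simp
qed

end

theorem lemma4p9:
  fixes n k :: nat and phi :: "nat \<Rightarrow> nat \<Rightarrow> nat" and i :: nat
  assumes "k \<ge> 2"
    and "monotone_labeling n k phi"
    and "\<And>psi. monotone_labeling n k psi \<Longrightarrow> num_bad n phi \<le> num_bad n psi"
    and "2 \<le> i" and "i \<le> k"
  shows "card (Xset n phi i) + card (Xset n phi (i + 1))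
           \<le> card (Xset n phi (i - 2)) + card (Xset n phi (i - 1)) + 2"
proof -
  interpret optimal_edge_labeling n k phi
    using assms(2,3) by unfold_locales
  consider "Xset n phi i = {}" | "Xset n phi (i - 2) \<union> Xset n phi (i - 1) = {}"
    | "Xset n phi i \<noteq> {}" "Xset n phi (i - 2) \<union> Xset n phi (i - 1) \<noteq> {}" by blast
  then show ?thesis
  proof cases
    case 1
    then have "card (Xset n phi (i + 1)) \<le> 1"
      using card_Xset_le_1_if_gap[of "i + 1"] \<open>2 \<le> i\<close> by simp
    with 1 show ?thesis by simp
  next
    case 2
    then have "card (Xset n phi i) \<le> 1" "card (Xset n phi (i + 1)) \<le> 1"
      using card_Xset_le_1_if_gap[of i] card_Xset_Suc_le_1_if_gap[of i] \<open>2 \<le> i\<close> by auto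
    then show ?thesis by simp
  next
    case 3
    then show ?thesis using card_Xset_pair_le[OF \<open>2 \<le> i\<close>] by simp
  qed
qed

end
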